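(* Let $A\bowtie^{\theta} I$ be an amalgamated Banach algebra as in the context, and assume that $A\bowtie^\theta I$ is commutative, $\sigma(A)\neq\emptyset$, and $\theta(A)I=\{\theta(a)i: a\in A, i\in I\}$ has dense linear span in $I$. Then $A\bowtie^{\theta} I$ is semisimple if and only if both $A$ and $I$ are semisimple.
   Context: Let $A$ and $B$ be Banach algebras, $\theta:A\to B$ a continuous algebra homomorphism with $\|\theta\|\le 1$, and $I$ a closed two-sided ideal of $B$. The amalgamated Banach algebra $A\bowtie^{\theta} I$ is the Banach space $\{(a,i): a\in A,\ i\in I\}$ with norm $\|(a,i)\|=\|a\|+\|i\|$ and product $(a,i)\cdot(a',i')=(aa',\ \theta(a)i'+i\theta(a')+ii')$. For a commutative Banach algebra $C$, $\sigma(C)$ is the set of nonzero multiplicative linear functionals on $C$, $\mathrm{rad}\,C=\bigcap_{\chi\in\sigma(C)}\ker\chi$ (equal to $C$ if $\sigma(C)=\emptyset$), and $C$ is semisimple if $\mathrm{rad}\,C=\{0\}$. *)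

theory Defs
  imports "HOL-Analysis.Analysis"
begin

class complex_banach_algebra = banach + real_normed_algebra +
  fixes scaleC :: "complex \<Rightarrow> 'a \<Rightarrow> 'a"
  assumes scaleC_add_right: "scaleC c (x + y) = scaleC c x + scaleC c y"
    and scaleC_add_left: "scaleC (c + d) x = scaleC c x + scaleC d x"
    and scaleC_scaleC: "scaleC c (scaleC d x) = scaleC (c * d) x"
    and scaleC_one: "scaleC 1 x = x"
    and scaleR_scaleC: "scaleR r x = scaleC (complex_of_real r) x"
    and norm_scaleC: "norm (scaleC c x) = cmod c * norm x"
    and mult_scaleC_left: "scaleC c x * y = scaleC c (x * y)"
    and mult_scaleC_right: "x * scaleC c y = scaleC c (x * y)"

definition is_character ::
  "'v set \<Rightarrow> ('v \<Rightarrow> 'v \<Rightarrow> 'v) \<Rightarrow> (complex \<Rightarrow> 'v \<Rightarrow> 'v) \<Rightarrow> ('v \<Rightarrow> 'v \<Rightarrow> 'v)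
   \<Rightarrow> ('v \<Rightarrow> complex) \<Rightarrow> bool" where
  "is_character S ad sc mul chi \<longleftrightarrow>
     (\<forall>x\<in>S. \<forall>y\<in>S. chi (ad x y) = chi x + chi y) \<and>
     (\<forall>c. \<forall>x\<in>S. chi (sc c x) = c * chi x) \<and>
     (\<forall>x\<in>S. \<forall>y\<in>S. chi (mul x y) = chi x * chi y) \<and>
     (\<exists>x\<in>S. chi x \<noteq> 0)"

text \<open>Gelfand space sigma(C) (functionals considered as restricted to the carrier).\<close>
definition gelfand_space ::
  "'v set \<Rightarrow> ('v \<Rightarrow> 'v \<Rightarrow> 'v) \<Rightarrow> (complex \<Rightarrow> 'v \<Rightarrow> 'v) \<Rightarrow> ('v \<Rightarrow> 'v \<Rightarrow> 'v)
   \<Rightarrow> ('v \<Rightarrow> complex) set" where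
  "gelfand_space S ad sc mul =
     {chi. is_character S ad sc mul chi \<and> (\<forall>x. x \<notin> S \<longrightarrow> chi x = 0)}"

text \<open>rad C = intersection of kernels of characters (= C if there are none).\<close>
definition radical ::
  "'v set \<Rightarrow> ('v \<Rightarrow> 'v \<Rightarrow> 'v) \<Rightarrow> (complex \<Rightarrow> 'v \<Rightarrow> 'v) \<Rightarrow> ('v \<Rightarrow> 'v \<Rightarrow> 'v) \<Rightarrow> 'v set" where
  "radical S ad sc mul =
     {x\<in>S. \<forall>chi\<in>gelfand_space S ad sc mul. chi x = 0}"

definition semisimple ::
  "'v set \<Rightarrow> 'v \<Rightarrow> ('v \<Rightarrow> 'v \<Rightarrow> 'v) \<Rightarrow> (complex \<Rightarrow> 'v \<Rightarrow> 'v) \<Rightarrow> ('v \<Rightarrow> 'v \<Rightarrow> 'v) \<Rightarrow> bool" where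
  "semisimple S z ad sc mul \<longleftrightarrow> radical S ad sc mul = {z}"

definition algebra_hom :: "('a::complex_banach_algebra \<Rightarrow> 'b::complex_banach_algebra) \<Rightarrow> bool" where
  "algebra_hom \<theta> \<longleftrightarrow> bounded_linear \<theta> \<and> (\<forall>c x. \<theta> (scaleC c x) = scaleC c (\<theta> x)) \<and>
     (\<forall>x y. \<theta> (x * y) = \<theta> x * \<theta> y)"

definition closed_ideal :: "'b::complex_banach_algebra set \<Rightarrow> bool" where
  "closed_ideal I \<longleftrightarrow> closed I \<and> 0 \<in> I \<and> (\<forall>x\<in>I. \<forall>y\<in>I. x + y \<in> I) \<and>
     (\<forall>c. \<forall>x\<in>I. scaleC c x \<in> I) \<and> (\<forall>b. \<forall>x\<in>I. b * x \<in> I \<and> x * b \<in> I)"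

definition cspan :: "'a::complex_banach_algebra set \<Rightarrow> 'a set" where
  "cspan S = {\<Sum>x\<in>T. scaleC (c x) x | T c. finite T \<and> T \<subseteq> S}"

text \<open>The amalgamated algebra A \<bowtie>^\<theta> I, carrier A \<times> I inside 'a \<times> 'b
  (the norm ||a|| + ||i|| plays no role in the algebraic notions below).\<close>
definition amal_carrier :: "'b set \<Rightarrow> ('a \<times> 'b) set" where
  "amal_carrier I = {(a, i). i \<in> I}"

definition amal_add :: "'a::complex_banach_algebra \<times> 'b::complex_banach_algebra \<Rightarrow> 'a \<times> 'b \<Rightarrow> 'a \<times> 'b" where
  "amal_add x y = (fst x + fst y, snd x + snd y)"

definition amal_scal :: "complex \<Rightarrow> 'a::complex_banach_algebra \<times> 'b::complex_banach_algebra \<Rightarrow> 'a \<times> 'b" where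
  "amal_scal c x = (scaleC c (fst x), scaleC c (snd x))"

definition amal_mult :: "('a::complex_banach_algebra \<Rightarrow> 'b::complex_banach_algebra)
    \<Rightarrow> 'a \<times> 'b \<Rightarrow> 'a \<times> 'b \<Rightarrow> 'a \<times> 'b" where
  "amal_mult \<theta> x y = (fst x * fst y, \<theta> (fst x) * snd y + snd x * \<theta> (fst y) + snd x * snd y)"

end

theory Submission
  imports Defs
begin

text \<open>Every character of \<open>A \<bowtie>\<^sup>\<theta> I\<close> restricts to a character (or to zero) on \<open>A \<times> 0\<close> and on
  \<open>0 \<times> I\<close>, so \<open>rad A \<times> 0\<close> and \<open>0 \<times> rad I\<close> lie in the radical of the amalgam.  Conversely a
  character \<open>\<phi>\<close> of \<open>A\<close> lifts to \<open>(a, i) \<mapsto> \<phi> a\<close>, and a character \<open>\<psi>\<close> of \<open>I\<close> with \<open>\<psi> j \<noteq> 0\<close>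
  lifts to \<open>(a, i) \<mapsto> \<psi> (\<theta> a * j) / \<psi> j + \<psi> i\<close>; an element killed by all these lifts has
  first coordinate in \<open>rad A\<close> and then second coordinate in \<open>rad I\<close>.  Characters here are
  purely algebraic.\<close>

lemma scaleC_zero [simp]: "scaleC c (0::'a::complex_banach_algebra) = 0"
  by (metis add_cancel_right_right scaleC_add_right)

lemma gelfand_spaceI:
  assumes "\<And>x y. x \<in> S \<Longrightarrow> y \<in> S \<Longrightarrow> chi (ad x y) = chi x + chi y"
    and "\<And>c x. x \<in> S \<Longrightarrow> chi (sc c x) = c * chi x"
    and "\<And>x y. x \<in> S \<Longrightarrow> y \<in> S \<Longrightarrow> chi (mul x y) = chi x * chi y"
    and "x \<in> S" "chi x \<noteq> 0"
    and "\<And>x. x \<notin> S \<Longrightarrow> chi x = 0"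
  shows "chi \<in> gelfand_space S ad sc mul"
  using assms unfolding gelfand_space_def is_character_def by blast

lemma gelfand_spaceD:
  assumes "chi \<in> gelfand_space S ad sc mul"
  shows "\<And>x y. x \<in> S \<Longrightarrow> y \<in> S \<Longrightarrow> chi (ad x y) = chi x + chi y"
    and "\<And>c x. x \<in> S \<Longrightarrow> chi (sc c x) = c * chi x"
    and "\<And>x y. x \<in> S \<Longrightarrow> y \<in> S \<Longrightarrow> chi (mul x y) = chi x * chi y"
    and "\<exists>x\<in>S. chi x \<noteq> 0"
  using assms unfolding gelfand_space_def is_character_def by blast+

lemma zero_in_radical:
  assumes "z \<in> S" "ad z z = z"
  shows "z \<in> radical S ad sc mul"
proof -
  have "chi z = 0" if "chi \<in> gelfand_space S ad sc mul" for chi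
    using gelfand_spaceD(1)[OF that assms(1,1)] assms(2) by simp
  then show ?thesis using assms(1) unfolding radical_def by blast
qed

lemma semisimple_iff_radical_subset:
  assumes "z \<in> S" "ad z z = z"
  shows "semisimple S z ad sc mul \<longleftrightarrow> radical S ad sc mul \<subseteq> {z}"
  using zero_in_radical[of z S ad sc mul] assms unfolding semisimple_def by blast

lemma mem_amal_carrier [simp]: "(a, i) \<in> amal_carrier I \<longleftrightarrow> i \<in> I"
  by (simp add: amal_carrier_def)

locale amalgamation =
  fixes \<theta> :: "'a::complex_banach_algebra \<Rightarrow> 'b::complex_banach_algebra"
    and I :: "'b set"
  assumes theta_add: "\<theta> (x + y) = \<theta> x + \<theta> y"
    and theta_scaleC: "\<theta> (scaleC c x) = scaleC c (\<theta> x)"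
    and theta_mult: "\<theta> (x * y) = \<theta> x * \<theta> y"
    and ideal_zero: "0 \<in> I"
    and ideal_add: "i \<in> I \<Longrightarrow> j \<in> I \<Longrightarrow> i + j \<in> I"
    and ideal_scaleC: "i \<in> I \<Longrightarrow> scaleC c i \<in> I"
    and ideal_mult_left: "i \<in> I \<Longrightarrow> b * i \<in> I"
    and ideal_mult_right: "i \<in> I \<Longrightarrow> i * b \<in> I"
begin

lemma theta_zero [simp]: "\<theta> 0 = 0"
  using theta_add[of 0 0] by simp

abbreviation "\<sigma>A \<equiv> gelfand_space (UNIV :: 'a set) (+) scaleC (*)"
abbreviation "\<sigma>I \<equiv> gelfand_space I (+) scaleC (*)"
abbreviation "\<sigma>C \<equiv> gelfand_space (amal_carrier I) amal_add amal_scal (amal_mult \<theta>)"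
abbreviation "radA \<equiv> radical (UNIV :: 'a set) (+) scaleC (*)"
abbreviation "radI \<equiv> radical I (+) scaleC (*)"
abbreviation "radC \<equiv> radical (amal_carrier I) amal_add amal_scal (amal_mult \<theta>)"

lemma amal_mult_in_ideal: "i \<in> I \<Longrightarrow> i' \<in> I \<Longrightarrow> \<theta> a * i' + i * \<theta> a' + i * i' \<in> I"
  by (simp add: ideal_add ideal_mult_left ideal_mult_right)

lemma amal_gelfand_spaceI:
  assumes add: "\<And>a a' i i'. i \<in> I \<Longrightarrow> i' \<in> I \<Longrightarrow> chi (a + a', i + i') = chi (a, i) + chi (a', i')"
    and scal: "\<And>c a i. i \<in> I \<Longrightarrow> chi (scaleC c a, scaleC c i) = c * chi (a, i)"
    and mult: "\<And>a a' i i'. i \<in> I \<Longrightarrow> i' \<in> I \<Longrightarrow>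
      chi (a * a', \<theta> a * i' + i * \<theta> a' + i * i') = chi (a, i) * chi (a', i')"
    and nonzero: "i \<in> I" "chi (a, i) \<noteq> 0"
    and outside: "\<And>a i. i \<notin> I \<Longrightarrow> chi (a, i) = 0"
  shows "chi \<in> \<sigma>C"
proof (rule gelfand_spaceI)
  show "(a, i) \<in> amal_carrier I" "chi (a, i) \<noteq> 0" using nonzero by simp_all
qed (auto simp: amal_carrier_def amal_add_def amal_scal_def amal_mult_def add scal mult outside)

lemma amal_gelfand_spaceD:
  assumes "chi \<in> \<sigma>C" "i \<in> I" "i' \<in> I"
  shows "chi (a + a', i + i') = chi (a, i) + chi (a', i')"
    and "chi (scaleC c a, scaleC c i) = c * chi (a, i)"
    and "chi (a * a', \<theta> a * i' + i * \<theta> a' + i * i') = chi (a, i) * chi (a', i')"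
  using gelfand_spaceD(1)[OF assms(1), of "(a, i)" "(a', i')"]
    gelfand_spaceD(2)[OF assms(1), of "(a, i)" c]
    gelfand_spaceD(3)[OF assms(1), of "(a, i)" "(a', i')"] assms(2,3)
  by (simp_all add: amal_add_def amal_scal_def amal_mult_def)

lemma restrict_left_in_gelfand_space:
  assumes "chi \<in> \<sigma>C" "chi (a, 0) \<noteq> 0"
  shows "(\<lambda>a. chi (a, 0)) \<in> \<sigma>A"
  using amal_gelfand_spaceD[OF assms(1) ideal_zero ideal_zero] assms(2)
  by (intro gelfand_spaceI[of UNIV _ _ _ _ a]) simp_all

lemma restrict_right_in_gelfand_space:
  assumes "chi \<in> \<sigma>C" "j \<in> I" "chi (0, j) \<noteq> 0"
  shows "(\<lambda>i. if i \<in> I then chi (0, i) else 0) \<in> \<sigma>I"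
  using amal_gelfand_spaceD(1,3)[OF assms(1), where a=0 and a'=0]
    amal_gelfand_spaceD(2)[OF assms(1) _ assms(2), where a=0] assms(2,3)
  by (intro gelfand_spaceI[of I _ _ _ _ j]) (simp_all add: ideal_add ideal_scaleC ideal_mult_right)

lemma lift_left_in_gelfand_space:
  assumes "phi \<in> \<sigma>A"
  shows "(\<lambda>(a, i). if i \<in> I then phi a else 0) \<in> \<sigma>C"
proof -
  obtain a where "phi a \<noteq> 0" using gelfand_spaceD(4)[OF assms] by blast
  then show ?thesis
    using gelfand_spaceD(1-3)[OF assms]
    by (intro amal_gelfand_spaceI[where i=0 and a=a])
      (simp_all add: ideal_zero ideal_add ideal_scaleC amal_mult_in_ideal)
qed

lemma radical_amal_Pair_left: "a \<in> radA \<Longrightarrow> (a, 0) \<in> radC"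
  unfolding radical_def using restrict_left_in_gelfand_space ideal_zero by fastforce

lemma radical_amal_Pair_right: "i \<in> radI \<Longrightarrow> (0, i) \<in> radC"
  unfolding radical_def using restrict_right_in_gelfand_space by fastforce

lemma radical_amal_fst: "(a, i) \<in> radC \<Longrightarrow> a \<in> radA"
  unfolding radical_def using lift_left_in_gelfand_space by fastforce

lemma commute_of_amal_commute:
  assumes "\<forall>x\<in>amal_carrier I. \<forall>y\<in>amal_carrier I. amal_mult \<theta> x y = amal_mult \<theta> y x"
    and "i \<in> I" "j \<in> I"
  shows "i * j = j * i" and "\<theta> a * i = i * \<theta> a"
  using assms(1)[rule_format, of "(0, i)" "(0, j)"] assms(1)[rule_format, of "(a, 0)" "(0, i)"]
    assms(2,3) ideal_zero
  by (simp_all add: amal_mult_def)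

end

locale commutative_amalgamation = amalgamation +
  assumes ideal_commute: "i \<in> I \<Longrightarrow> j \<in> I \<Longrightarrow> i * j = j * i"
    and theta_commute: "i \<in> I \<Longrightarrow> \<theta> a * i = i * \<theta> a"
begin

text \<open>Since \<open>I\<close> is commutative, a character \<open>\<psi>\<close> of \<open>I\<close> turns multiplication by \<open>\<theta> a\<close> into
  multiplication by a scalar.\<close>
lemma character_theta_action:
  assumes "psi \<in> \<sigma>I" "j \<in> I" "psi j \<noteq> 0" "k \<in> I"
  shows "psi (\<theta> a * k) = psi (\<theta> a * j) / psi j * psi k"
proof -
  note mult = gelfand_spaceD(3)[OF assms(1)]
  have "psi (\<theta> a * k) * psi j = psi (\<theta> a * k * j)"
    using assms(2,4) by (simp add: mult ideal_mult_left)
  also have "\<theta> a * k * j = \<theta> a * j * k"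
    using ideal_commute[OF assms(4,2)] by (simp add: mult.assoc)
  also have "psi (\<theta> a * j * k) = psi (\<theta> a * j) * psi k"
    using assms(2,4) by (simp add: mult ideal_mult_left)
  finally show ?thesis using assms(3) by (simp add: field_simps)
qed

lemma lift_right_in_gelfand_space:
  assumes psi: "psi \<in> \<sigma>I" and j: "j \<in> I" "psi j \<noteq> 0"
  shows "(\<lambda>(a, i). if i \<in> I then psi (\<theta> a * j) / psi j + psi i else 0) \<in> \<sigma>C"
proof -
  define eig where "eig a = psi (\<theta> a * j) / psi j" for a
  note add = gelfand_spaceD(1)[OF psi] and scal = gelfand_spaceD(2)[OF psi]
    and mult = gelfand_spaceD(3)[OF psi]
  have action: "psi (\<theta> a * k) = eig a * psi k" if "k \<in> I" for a k
    unfolding eig_def using character_theta_action[OF psi j that] .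
  have eig_add: "eig (a + a') = eig a + eig a'" for a a'
    using j by (simp add: eig_def theta_add distrib_right add ideal_mult_left add_divide_distrib)
  have eig_scal: "eig (scaleC c a) = c * eig a" for c a
    using j by (simp add: eig_def theta_scaleC mult_scaleC_left scal ideal_mult_left)
  have eig_mult: "eig (a * a') = eig a * eig a'" for a a'
    using action[of "\<theta> a' * j" a] j by (simp add: eig_def theta_mult mult.assoc ideal_mult_left)
  have eig_zero: "eig 0 = 0"
    using eig_add[of 0 0] by simp
  have psi_zero: "psi 0 = 0"
    using add[OF ideal_zero ideal_zero] by simp
  define chi where "chi = (\<lambda>(a, i). if i \<in> I then eig a + psi i else 0)"
  have "chi \<in> \<sigma>C"
  proof (rule amal_gelfand_spaceI[where i=j and a=0])
    fix a a' i i' assume i: "i \<in> I" "i' \<in> I"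
    have "psi (\<theta> a * i' + i * \<theta> a' + i * i') = eig a * psi i' + eig a' * psi i + psi i * psi i'"
      using i theta_commute[OF i(1), of a', symmetric]
      by (simp add: add mult action ideal_add ideal_mult_left ideal_mult_right)
    then show "chi (a * a', \<theta> a * i' + i * \<theta> a' + i * i') = chi (a, i) * chi (a', i')"
      using i amal_mult_in_ideal[OF i, of a a'] by (simp add: chi_def eig_mult algebra_simps)
  qed (use j in \<open>auto simp: chi_def eig_add eig_scal eig_zero psi_zero add scal ideal_add
        ideal_scaleC algebra_simps\<close>)
  then show ?thesis unfolding chi_def eig_def .
qed

lemma radical_amal_snd: "(0, i) \<in> radC \<Longrightarrow> i \<in> radI"
proof -
  assume rad: "(0, i) \<in> radC"
  have "psi i = 0" if psi: "psi \<in> \<sigma>I" for psi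
  proof -
    obtain j where j: "j \<in> I" "psi j \<noteq> 0" using gelfand_spaceD(4)[OF psi] by blast
    have "psi 0 = 0" using gelfand_spaceD(1)[OF psi ideal_zero ideal_zero] by simp
    then show ?thesis
      using rad lift_right_in_gelfand_space[OF psi j] unfolding radical_def by fastforce
  qed
  then show ?thesis using rad unfolding radical_def by simp
qed

lemma radical_amal_trivial_iff: "radC \<subseteq> {(0, 0)} \<longleftrightarrow> radA \<subseteq> {0} \<and> radI \<subseteq> {0}"
proof
  assume "radC \<subseteq> {(0, 0)}"
  then show "radA \<subseteq> {0} \<and> radI \<subseteq> {0}"
    using radical_amal_Pair_left radical_amal_Pair_right by blast
next
  assume "radA \<subseteq> {0} \<and> radI \<subseteq> {0}"
  then show "radC \<subseteq> {(0, 0)}"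
    using radical_amal_fst radical_amal_snd by fastforce
qed

end

theorem corollary5p4:
  fixes \<theta> :: "'a::complex_banach_algebra \<Rightarrow> 'b::complex_banach_algebra"
    and I :: "'b set"
  assumes hom: "algebra_hom \<theta>"
    and norm_le: "\<forall>a. norm (\<theta> a) \<le> norm a"
    and ideal: "closed_ideal I"
    and comm: "\<forall>x\<in>amal_carrier I. \<forall>y\<in>amal_carrier I. amal_mult \<theta> x y = amal_mult \<theta> y x"
    and sigmaA: "gelfand_space (UNIV :: 'a set) (+) scaleC (*) \<noteq> {}"
    and dense: "closure (cspan {\<theta> a * i | a i. i \<in> I}) = I"
  shows "semisimple (amal_carrier I) (0, 0) amal_add amal_scal (amal_mult \<theta>) \<longleftrightarrow>
           semisimple (UNIV :: 'a set) 0 (+) scaleC (*) \<and> semisimple I 0 (+) scaleC (*)"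
proof -
  interpret amalgamation \<theta> I
    using hom ideal by unfold_locales (auto simp: algebra_hom_def closed_ideal_def linear_simps)
  interpret commutative_amalgamation \<theta> I
    using commute_of_amal_commute[OF comm] by unfold_locales
  have "semisimple (amal_carrier I) (0, 0) amal_add amal_scal (amal_mult \<theta>) \<longleftrightarrow>
      radC \<subseteq> {(0, 0)}"
    by (rule semisimple_iff_radical_subset) (simp_all add: ideal_zero amal_add_def)
  moreover have "semisimple (UNIV :: 'a set) 0 (+) scaleC (*) \<longleftrightarrow> radA \<subseteq> {0}"
    by (rule semisimple_iff_radical_subset) simp_all
  moreover have "semisimple I 0 (+) scaleC (*) \<longleftrightarrow> radI \<subseteq> {0}"
    by (rule semisimple_iff_radical_subset) (simp_all add: ideal_zero)
  moreover note radical_amal_trivial_iff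
  ultimately show ?thesis by simp
qed

end
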